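(* Let $W_{24,23}$ be the $24\times 24$ matrix \[ W_{24,23}=\begin{pmatrix} 0 & 1 & \cdots & 1\\ -1 & & & \\ \vdots & & A & \\ -1 & & & \end{pmatrix}, \] where $A$ is the $23\times 23$ circulant matrix with first row $(0,1,1,1,1,-1,1,-1,1,1,-1,-1,1,1,-1,-1,1,-1,1,-1,-1,-1,-1)$. Let $C_3(W_{24,23})$ be the ternary code of length $48$ with generator matrix $(I\ \ W_{24,23})$, entries read modulo $3$. Then the lattice $A_3(C_3(W_{24,23}))$ contains a $k$-frame for every positive integer $k\ge 3$ that is not of the form $2^{m_1}5^{m_2}7^{m_3}23^{m_4}$ with $m_1,m_2,m_3,m_4$ non-negative integers.
   Context: An $N\times N$ circulant matrix with first row $(r_0,\dots,r_{N-1})$ is the matrix whose $(i,j)$ entry ($0\le i,j\le N-1$) is $r_{(j-i)\bmod N}$. Construction A: with $\rho:\mathbb{Z}_k\to\mathbb{Z}$ sending $0,1,\dots,k-1$ to $0,1,\dots,k-1$, for a $\mathbb{Z}_k$-code $C$ of length $N$ set $A_k(C)=\frac{1}{\sqrt{k}}\{\rho(C)+k\mathbb{Z}^N\}$. A $t$-frame of a lattice in dimension $N$ is a set of $N$ lattice vectors $f_1,\dots,f_N$ with $(f_i,f_j)=t\,\delta_{i,j}$. *)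

theory Defs
  imports Complex_Main
begin

text \<open>Matrices are represented as functions nat => nat => int, indices starting at 0.
  Elements of Z_k are represented by their canonical integer representatives 0..k-1,
  so the map rho of the paper is the inclusion of these representatives into Z.
  Vectors of length N are functions nat => _ that vanish outside {..<N}.\<close>

definition circulant :: "nat \<Rightarrow> (nat \<Rightarrow> int) \<Rightarrow> nat \<Rightarrow> nat \<Rightarrow> int" where
  "circulant N r i j = r ((j + N - i) mod N)"

definition A_row :: "int list" where
  "A_row = [0,1,1,1,1,-1,1,-1,1,1,-1,-1,1,1,-1,-1,1,-1,1,-1,-1,-1,-1]"

definition A23 :: "nat \<Rightarrow> nat \<Rightarrow> int" where
  "A23 = circulant 23 (\<lambda>l. A_row ! l)"

definition W24 :: "nat \<Rightarrow> nat \<Rightarrow> int" where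
  "W24 i j = (if i = 0 then (if j = 0 then 0 else 1)
              else if j = 0 then -1 else A23 (i - 1) (j - 1))"

definition genIW :: "nat \<Rightarrow> nat \<Rightarrow> int" where
  "genIW i j = (if j < 24 then (if i = j then 1 else 0) else W24 i (j - 24))"

definition gen_code :: "int \<Rightarrow> nat \<Rightarrow> nat \<Rightarrow> (nat \<Rightarrow> nat \<Rightarrow> int) \<Rightarrow> (nat \<Rightarrow> int) set" where
  "gen_code k N r G = {c. \<exists>a :: nat \<Rightarrow> int.
      (\<forall>j<N. c j = (\<Sum>i<r. a i * G i j) mod k) \<and> (\<forall>j\<ge>N. c j = 0)}"

definition constrA :: "int \<Rightarrow> nat \<Rightarrow> (nat \<Rightarrow> int) set \<Rightarrow> (nat \<Rightarrow> real) set" where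
  "constrA k N C = {v. \<exists>c\<in>C. \<exists>z :: nat \<Rightarrow> int. \<forall>j.
      v j = (if j < N then (of_int (c j) + of_int k * of_int (z j)) / sqrt (of_int k) else 0)}"

definition inner_N :: "nat \<Rightarrow> (nat \<Rightarrow> real) \<Rightarrow> (nat \<Rightarrow> real) \<Rightarrow> real" where
  "inner_N N x y = (\<Sum>l<N. x l * y l)"

definition has_frame :: "(nat \<Rightarrow> real) set \<Rightarrow> nat \<Rightarrow> real \<Rightarrow> bool" where
  "has_frame L N t = (\<exists>f :: nat \<Rightarrow> nat \<Rightarrow> real.
      (\<forall>i<N. f i \<in> L) \<and>
      (\<forall>i<N. \<forall>j<N. inner_N N (f i) (f j) = (if i = j then t else 0)))"

end

theory Submission
  imports Defs "HOL-Computational_Algebra.Primes" "HOL-Number_Theory.Cong"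
begin

text \<open>
  The frame comes from an orthogonal design. Six 48 x 48 integer matrices D_0, ..., D_5, Kronecker
  products of 2 x 2 sign matrices with the identity, three signed permutation matrices and W, satisfy
  D_p D_q^T + D_q D_p^T = 0 for p \<noteq> q and D_p D_p^T = I for p < 5, D_5 D_5^T = 23 I.  Hence for integer
  weights w the rows of N = \<Sum> w_p D_p are pairwise orthogonal of norm
  w_0^2 + ... + w_4^2 + 23 w_5^2.  If w_1, ..., w_4 are divisible by 3 and w_0 \<equiv> w_5 (mod 3), then
  N \<equiv> w_5 (D_0 + D_5) = w_5 [[I, W], [W, I]] (mod 3), and since W^2 = -23 I \<equiv> I the rows of N reduce to
  codewords; so the rows of N / sqrt 3 form a k-frame of A_3(C) when
  3k = w_0^2 + 9 (c_1^2 + ... + c_4^2) + 23 w_5^2.  Choosing (w_0, w_5) = (0, 0), (1, 1) or (4, 1)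
  according to k mod 3, Lagrange's four-square theorem supplies c_1, ..., c_4 for every k \<ge> 3 except
  k = 4, 5, 7, 10, all of the excluded form.
\<close>

section \<open>Lagrange's four-square theorem\<close>

definition sum_four_squares :: "int \<Rightarrow> bool" where
  "sum_four_squares n \<longleftrightarrow> (\<exists>a b c d. n = a\<^sup>2 + b\<^sup>2 + c\<^sup>2 + d\<^sup>2)"

lemma sum_four_squaresI: "n = a\<^sup>2 + b\<^sup>2 + c\<^sup>2 + d\<^sup>2 \<Longrightarrow> sum_four_squares n"
  unfolding sum_four_squares_def by blast

lemma euler_four_square_identity:
  fixes a b c d w x y z :: "'a :: comm_ring_1"
  shows "(a\<^sup>2 + b\<^sup>2 + c\<^sup>2 + d\<^sup>2) * (w\<^sup>2 + x\<^sup>2 + y\<^sup>2 + z\<^sup>2) =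
    (a*w + b*x + c*y + d*z)\<^sup>2 + (a*x - b*w + c*z - d*y)\<^sup>2 +
    (a*y - b*z - c*w + d*x)\<^sup>2 + (a*z + b*y - c*x - d*w)\<^sup>2"
  by (simp add: power2_eq_square algebra_simps)

lemma sum_four_squares_mult:
  "sum_four_squares m \<Longrightarrow> sum_four_squares n \<Longrightarrow> sum_four_squares (m * n)"
  unfolding sum_four_squares_def using euler_four_square_identity by metis

lemma square_mod_prime_inj:
  fixes p x y :: nat
  assumes "prime p" "2 * x < p" "2 * y < p" "[x\<^sup>2 = y\<^sup>2] (mod p)"
  shows "x = y"
proof -
  have "int p dvd (int x - int y) * (int x + int y)"
    using assms(4) by (simp add: cong_iff_dvd_diff power2_eq_square algebra_simps flip: cong_int_iff)
  then have "int p dvd int x - int y \<or> int p dvd int x + int y"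
    using assms(1) by (simp add: prime_dvd_mult_iff)
  moreover have "\<bar>int x - int y\<bar> < int p" "int x + int y < int p"
    using assms(2,3) by linarith+
  ultimately show ?thesis
    using dvd_imp_le_int[of "int x - int y" "int p"] dvd_imp_le_int[of "int x + int y" "int p"] by force
qed

lemma prime_dvd_sum_two_squares_plus_one:
  fixes p :: nat
  assumes p: "prime p" and "odd p"
  shows "\<exists>x y. 2 * x < p \<and> 2 * y < p \<and> p dvd x\<^sup>2 + y\<^sup>2 + 1"
proof -
  define h where "h = p div 2"
  have p_eq: "p = 2 * h + 1" using \<open>odd p\<close> unfolding h_def by presburger
  have small: "2 * x < p" if "x \<in> {..h}" for x using that p_eq by simp
  have inj_sq: "inj_on (\<lambda>x. x\<^sup>2 mod p) {..h}"
    by (intro inj_onI square_mod_prime_inj[OF p small small]) (simp_all add: cong_def)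
  have inj_compl: "inj_on (\<lambda>y. p - 1 - y\<^sup>2 mod p) {..h}"
  proof (rule inj_onI)
    fix x y assume "x \<in> {..h}" "y \<in> {..h}" "p - 1 - x\<^sup>2 mod p = p - 1 - y\<^sup>2 mod p"
    moreover have "x\<^sup>2 mod p < p" "y\<^sup>2 mod p < p" using p_eq by simp_all
    ultimately have "[x\<^sup>2 = y\<^sup>2] (mod p)" unfolding cong_def by linarith
    with \<open>x \<in> {..h}\<close> \<open>y \<in> {..h}\<close> show "x = y" by (intro square_mod_prime_inj[OF p small small])
  qed
  let ?A = "(\<lambda>x. x\<^sup>2 mod p) ` {..h}" and ?B = "(\<lambda>y. p - 1 - y\<^sup>2 mod p) ` {..h}"
  have "?A \<inter> ?B \<noteq> {}"
  proof
    assume disjoint: "?A \<inter> ?B = {}"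
    have "?A \<union> ?B \<subseteq> {..<p}" using p_eq by auto
    then have "card (?A \<union> ?B) \<le> p" using card_mono[of "{..<p}"] by simp
    moreover have "card (?A \<union> ?B) = p + 1"
      using card_Un_disjoint[OF _ _ disjoint] card_image[OF inj_sq] card_image[OF inj_compl] p_eq
      by simp
    ultimately show False by simp
  qed
  then obtain x y where xy: "x \<le> h" "y \<le> h" "x\<^sup>2 mod p = p - 1 - y\<^sup>2 mod p"
    by auto
  moreover have "y\<^sup>2 mod p < p" using p_eq by simp
  ultimately have "x\<^sup>2 mod p + y\<^sup>2 mod p + 1 = p" by linarith
  moreover have "p dvd a + b + 1" if "a mod p + b mod p + 1 = p" for a b
    using that by (metis dvd_eq_mod_eq_0 mod_add_left_eq mod_add_right_eq mod_self)
  ultimately have "p dvd x\<^sup>2 + y\<^sup>2 + 1" by blast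
  with xy show ?thesis using small by auto
qed

lemma centered_residue:
  fixes m x :: int
  assumes "0 < m"
  obtains k where "- m < 2 * (x - m * k)" "2 * (x - m * k) \<le> m"
proof -
  define h where "h = (m - 1) div 2"
  define k where "k = (x + h) div m"
  define r where "r = (x + h) mod m"
  have "x - m * k = r - h"
    unfolding k_def r_def by (simp add: minus_mult_div_eq_mod[symmetric] algebra_simps)
  moreover have "0 \<le> r" "r < m" unfolding r_def using assms by simp_all
  moreover have "m - 2 \<le> 2 * h" "2 * h \<le> m - 1" unfolding h_def by linarith+
  ultimately have "- m < 2 * (r - h)" "2 * (r - h) \<le> m" by presburger+
  with \<open>x - m * k = r - h\<close> show ?thesis by (intro that[of k]) simp_all
qed

lemma sum_four_squares_dvd_if_common_residue:
  fixes m e ka kb kc kd :: int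
  assumes "e = 0 \<or> 2 * e = m"
  shows "m\<^sup>2 dvd (m*ka + e)\<^sup>2 + (m*kb + e)\<^sup>2 + (m*kc + e)\<^sup>2 + (m*kd + e)\<^sup>2"
  using assms
proof
  assume "e = 0"
  then show ?thesis by (simp add: power_mult_distrib flip: distrib_left)
next
  assume m: "2 * e = m"
  have "(m*ka + e)\<^sup>2 + (m*kb + e)\<^sup>2 + (m*kc + e)\<^sup>2 + (m*kd + e)\<^sup>2
      = m\<^sup>2 * (ka\<^sup>2 + ka + kb\<^sup>2 + kb + kc\<^sup>2 + kc + kd\<^sup>2 + kd + 1)"
    unfolding m[symmetric] by algebra
  then show ?thesis by simp
qed

lemma sum_four_squares_reduce:
  fixes m P a b c d ka kb kc kd r :: int
  assumes sum: "m * P = a\<^sup>2 + b\<^sup>2 + c\<^sup>2 + d\<^sup>2" and "m \<noteq> 0"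
    and residues: "(a - m*ka)\<^sup>2 + (b - m*kb)\<^sup>2 + (c - m*kc)\<^sup>2 + (d - m*kd)\<^sup>2 = m * r"
  shows "sum_four_squares (r * P)"
proof -
  define x1 where "x1 = P - (a*ka + b*kb + c*kc + d*kd)"
  define x2 where "x2 = - a*kb + b*ka - c*kd + d*kc"
  define x3 where "x3 = - a*kc + b*kd + c*ka - d*kb"
  define x4 where "x4 = - a*kd - b*kc + c*kb + d*ka"
  have "a*(a - m*ka) + b*(b - m*kb) + c*(c - m*kc) + d*(d - m*kd) = m * x1"
    using sum unfolding x1_def by (simp add: power2_eq_square algebra_simps)
  moreover have "a*(b - m*kb) - b*(a - m*ka) + c*(d - m*kd) - d*(c - m*kc) = m * x2"
    "a*(c - m*kc) - b*(d - m*kd) - c*(a - m*ka) + d*(b - m*kb) = m * x3"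
    "a*(d - m*kd) + b*(c - m*kc) - c*(b - m*kb) - d*(a - m*ka) = m * x4"
    unfolding x2_def x3_def x4_def by algebra+
  ultimately have "(m * P) * (m * r) = (m * x1)\<^sup>2 + (m * x2)\<^sup>2 + (m * x3)\<^sup>2 + (m * x4)\<^sup>2"
    using euler_four_square_identity[of a b c d "a - m*ka"] sum residues by metis
  then have "m\<^sup>2 * (r * P) = m\<^sup>2 * (x1\<^sup>2 + x2\<^sup>2 + x3\<^sup>2 + x4\<^sup>2)"
    by (simp add: power2_eq_square algebra_simps)
  with \<open>m \<noteq> 0\<close> show ?thesis by (intro sum_four_squaresI) simp
qed

lemma centered_square_bound:
  fixes m u :: int
  assumes "- m < 2 * u" "2 * u \<le> m"
  shows "4 * u\<^sup>2 \<le> m\<^sup>2" and "4 * u\<^sup>2 = m\<^sup>2 \<Longrightarrow> 2 * u = m"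
proof -
  have "(2 * u)\<^sup>2 \<le> m\<^sup>2" using assms by (intro abs_le_square_iff[THEN iffD1]) linarith
  then show "4 * u\<^sup>2 \<le> m\<^sup>2" by (simp add: power_mult_distrib)
  assume "4 * u\<^sup>2 = m\<^sup>2"
  then have "(2 * u)\<^sup>2 = m\<^sup>2" by (simp add: power_mult_distrib)
  then have "2 * u = m \<or> 2 * u = - m" by (rule power2_eq_iff[THEN iffD1])
  then show "2 * u = m" using assms by linarith
qed

lemma four_squares_extreme_residues:
  fixes m a b c d ka kb kc kd :: int
  assumes residues: "- m < 2 * (a - m*ka)" "2 * (a - m*ka) \<le> m" "- m < 2 * (b - m*kb)" "2 * (b - m*kb) \<le> m"
      "- m < 2 * (c - m*kc)" "2 * (c - m*kc) \<le> m" "- m < 2 * (d - m*kd)" "2 * (d - m*kd) \<le> m"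
    and extreme: "(a - m*ka)\<^sup>2 + (b - m*kb)\<^sup>2 + (c - m*kc)\<^sup>2 + (d - m*kd)\<^sup>2 \<in> {0, m\<^sup>2}"
  shows "m\<^sup>2 dvd a\<^sup>2 + b\<^sup>2 + c\<^sup>2 + d\<^sup>2"
proof -
  note bounds = centered_square_bound[OF residues(1,2)] centered_square_bound[OF residues(3,4)]
    centered_square_bound[OF residues(5,6)] centered_square_bound[OF residues(7,8)]
  obtain e where e: "e = 0 \<or> 2 * e = m"
    "a = m*ka + e" "b = m*kb + e" "c = m*kc + e" "d = m*kd + e"
  proof (cases "(a - m*ka)\<^sup>2 + (b - m*kb)\<^sup>2 + (c - m*kc)\<^sup>2 + (d - m*kd)\<^sup>2 = 0")
    case True
    then show ?thesis by (intro that[of 0]) (simp_all add: sum_power2_eq_zero_iff add_nonneg_eq_0_iff)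
  next
    case False
    with extreme have "(a - m*ka)\<^sup>2 + (b - m*kb)\<^sup>2 + (c - m*kc)\<^sup>2 + (d - m*kd)\<^sup>2 = m\<^sup>2"
      by simp
    then have sq: "4 * (a - m*ka)\<^sup>2 = m\<^sup>2" "4 * (b - m*kb)\<^sup>2 = m\<^sup>2" "4 * (c - m*kc)\<^sup>2 = m\<^sup>2"
      "4 * (d - m*kd)\<^sup>2 = m\<^sup>2"
      using bounds(1,3,5,7) by linarith+
    from bounds(2)[OF sq(1)] bounds(4)[OF sq(2)] bounds(6)[OF sq(3)] bounds(8)[OF sq(4)]
    show ?thesis by (intro that[of "a - m*ka"]) simp_all
  qed
  then show ?thesis using sum_four_squares_dvd_if_common_residue[OF e(1)] by simp
qed

lemma four_squares_descent_step:
  fixes p m a b c d :: int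
  assumes p: "prime p" and m: "1 < m" "m < p"
    and sum: "m * p = a\<^sup>2 + b\<^sup>2 + c\<^sup>2 + d\<^sup>2"
  obtains r where "0 < r" "r < m" "sum_four_squares (r * p)"
proof -
  from m have "0 < m" by simp
  obtain ka kb kc kd where
    residues: "- m < 2 * (a - m*ka)" "2 * (a - m*ka) \<le> m" "- m < 2 * (b - m*kb)" "2 * (b - m*kb) \<le> m"
      "- m < 2 * (c - m*kc)" "2 * (c - m*kc) \<le> m" "- m < 2 * (d - m*kd)" "2 * (d - m*kd) \<le> m"
    using centered_residue[OF \<open>0 < m\<close>] by metis
  define r where "r = p - (2*a*ka - m*ka\<^sup>2 + 2*b*kb - m*kb\<^sup>2 + 2*c*kc - m*kc\<^sup>2 + 2*d*kd - m*kd\<^sup>2)"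
  have r_eq: "(a - m*ka)\<^sup>2 + (b - m*kb)\<^sup>2 + (c - m*kc)\<^sup>2 + (d - m*kd)\<^sup>2 = m * r"
    using sum unfolding r_def by (simp add: power2_eq_square algebra_simps)
  have "0 \<le> m * r" by (simp flip: r_eq)
  then have "0 \<le> r" using \<open>0 < m\<close> by (simp add: zero_le_mult_iff)
  have "m * (4 * r) \<le> m * (4 * m)"
    using centered_square_bound(1)[OF residues(1,2)] centered_square_bound(1)[OF residues(3,4)]
      centered_square_bound(1)[OF residues(5,6)] centered_square_bound(1)[OF residues(7,8)] r_eq
    by (simp add: power2_eq_square)
  then have "r \<le> m" using \<open>0 < m\<close> by simp
  moreover have "r \<noteq> 0 \<and> r \<noteq> m"
  proof (rule ccontr)
    assume "\<not> (r \<noteq> 0 \<and> r \<noteq> m)"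
    then have "(a - m*ka)\<^sup>2 + (b - m*kb)\<^sup>2 + (c - m*kc)\<^sup>2 + (d - m*kd)\<^sup>2 \<in> {0, m\<^sup>2}"
      unfolding r_eq by (auto simp: power2_eq_square)
    then have "m\<^sup>2 dvd a\<^sup>2 + b\<^sup>2 + c\<^sup>2 + d\<^sup>2" by (rule four_squares_extreme_residues[OF residues])
    then have "m * m dvd m * p" by (simp add: sum power2_eq_square)
    then have "m dvd p" using \<open>0 < m\<close> by simp
    then have "m = 1 \<or> m = p" using p \<open>0 < m\<close> unfolding prime_int_iff by simp
    then show False using m by simp
  qed
  ultimately show ?thesis
    using sum_four_squares_reduce[OF sum _ r_eq] \<open>0 \<le> r\<close> \<open>0 < m\<close> by (intro that[of r]) auto
qed

lemma sum_four_squares_of_multiple: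
  fixes p m :: int
  assumes p: "prime p" and "0 < m" "m < p" "sum_four_squares (m * p)"
  shows "sum_four_squares p"
  using assms(2-4)
proof (induction "nat m" arbitrary: m rule: less_induct)
  case less
  show ?case
  proof (cases "m = 1")
    case True
    with less.prems show ?thesis by simp
  next
    case False
    with less.prems have "1 < m" by simp
    obtain a b c d where "m * p = a\<^sup>2 + b\<^sup>2 + c\<^sup>2 + d\<^sup>2"
      using less.prems(3) unfolding sum_four_squares_def by blast
    with p \<open>1 < m\<close> less.prems(2) obtain r where "0 < r" "r < m" "sum_four_squares (r * p)"
      by (rule four_squares_descent_step)
    then show ?thesis using less.hyps[of r] less.prems(2) by simp
  qed
qed

lemma sum_four_squares_prime:
  fixes p :: nat
  assumes p: "prime p"
  shows "sum_four_squares (int p)"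
proof (cases "p = 2")
  case True
  then show ?thesis by (intro sum_four_squaresI[of _ 1 1 0 0]) simp
next
  case False
  then have "2 < p" using prime_ge_2_nat[OF p] by simp
  then have "odd p" using prime_odd_nat[OF p] by simp
  obtain x y where xy: "2 * x < p" "2 * y < p" "p dvd x\<^sup>2 + y\<^sup>2 + 1"
    using prime_dvd_sum_two_squares_plus_one[OF p \<open>odd p\<close>] by blast
  then obtain m where m: "x\<^sup>2 + y\<^sup>2 + 1 = p * m" by blast
  have "x\<^sup>2 + y\<^sup>2 + 1 < p\<^sup>2"
  proof -
    have "(2 * x)\<^sup>2 < p\<^sup>2" "(2 * y)\<^sup>2 < p\<^sup>2" using xy(1,2) by (intro power_strict_mono; simp)+
    then have "4 * x\<^sup>2 < p\<^sup>2" "4 * y\<^sup>2 < p\<^sup>2" by (simp_all add: power_mult_distrib)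
    moreover have "4 \<le> p\<^sup>2" using prime_ge_2_nat[OF p] power_mono[of 2 p 2] by simp
    ultimately show ?thesis by linarith
  qed
  then have "p * m < p * p" using m by (simp add: power2_eq_square)
  then have "m < p" by simp
  moreover have "0 < m" using m by (cases m) auto
  moreover have "sum_four_squares (int m * int p)"
    using arg_cong[OF m, of int] by (intro sum_four_squaresI[of _ "int x" "int y" 1 0]) (simp add: mult.commute)
  ultimately show ?thesis using sum_four_squares_of_multiple[of "int p" "int m"] p by simp
qed

theorem sum_four_squares_nat: "sum_four_squares (int n)"
proof (induction n rule: prime_divisors_induct)
  case zero
  show ?case by (intro sum_four_squaresI[of _ 0 0 0 0]) simp
next
  case (unit x)
  then show ?case by (intro sum_four_squaresI[of _ 1 0 0 0]) simp
next
  case (factor p x)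
  then show ?case using sum_four_squares_mult[OF sum_four_squares_prime] by simp
qed

section \<open>Anticommuting families of matrices\<close>

definition mult_transpose ::
    "nat \<Rightarrow> (nat \<Rightarrow> nat \<Rightarrow> int) \<Rightarrow> (nat \<Rightarrow> nat \<Rightarrow> int) \<Rightarrow> nat \<Rightarrow> nat \<Rightarrow> int" where
  "mult_transpose n X Y i j = (\<Sum>l<n. X i l * Y j l)"

definition symmetric_on :: "nat \<Rightarrow> (nat \<Rightarrow> nat \<Rightarrow> int) \<Rightarrow> bool" where
  "symmetric_on n M \<longleftrightarrow> (\<forall>i<n. \<forall>j<n. M j i = M i j)"

definition skew_on :: "nat \<Rightarrow> (nat \<Rightarrow> nat \<Rightarrow> int) \<Rightarrow> bool" where
  "skew_on n M \<longleftrightarrow> (\<forall>i<n. \<forall>j<n. M j i = - M i j)"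

definition kron :: "nat \<Rightarrow> (nat \<Rightarrow> nat \<Rightarrow> int) \<Rightarrow> (nat \<Rightarrow> nat \<Rightarrow> int) \<Rightarrow> nat \<Rightarrow> nat \<Rightarrow> int" where
  "kron n A T i j = A (i div n) (j div n) * T (i mod n) (j mod n)"

lemma mult_transpose_swap: "mult_transpose n X Y i j = mult_transpose n Y X j i"
  unfolding mult_transpose_def by (simp add: mult.commute)

lemma skew_on_mult_transpose_swap:
  "skew_on n (mult_transpose n X Y) \<longleftrightarrow> skew_on n (mult_transpose n Y X)"
  unfolding skew_on_def by (metis mult_transpose_swap)

lemma sum_lessThan_mult_div_mod:
  fixes m n :: nat
  shows "(\<Sum>l<m * n. f (l div n) (l mod n)) = (\<Sum>a<m. \<Sum>b<n. f a b)"
proof -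
  have n_pos: "0 < n" if "l < m * n" for l using that by (cases n) auto
  have bound: "a * n + b < m * n" if "a < m" "b < n" for a b
  proof -
    have "a * n + b < Suc a * n" using that by simp
    also have "\<dots> \<le> m * n" using that by (intro mult_le_mono1) simp
    finally show ?thesis .
  qed
  have "(\<Sum>l<m * n. f (l div n) (l mod n)) = (\<Sum>(a, b) \<in> {..<m} \<times> {..<n}. f a b)"
    by (rule sum.reindex_bij_witness[where i = "\<lambda>(a, b). a * n + b" and j = "\<lambda>l. (l div n, l mod n)"])
      (auto simp: less_mult_imp_div_less bound dest: n_pos)
  then show ?thesis by (simp add: sum.cartesian_product)
qed

lemma mult_transpose_kron:
  "mult_transpose (m * n) (kron n A T) (kron n B U) = kron n (mult_transpose m A B) (mult_transpose n T U)"
proof (intro ext)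
  fix i j
  let ?f = "\<lambda>a b. A (i div n) a * B (j div n) a * (T (i mod n) b * U (j mod n) b)"
  have "mult_transpose (m * n) (kron n A T) (kron n B U) i j = (\<Sum>l<m * n. ?f (l div n) (l mod n))"
    unfolding mult_transpose_def kron_def by (simp add: mult_ac)
  also have "\<dots> = (\<Sum>a<m. \<Sum>b<n. ?f a b)" by (rule sum_lessThan_mult_div_mod)
  also have "\<dots> = kron n (mult_transpose m A B) (mult_transpose n T U) i j"
    unfolding mult_transpose_def kron_def by (simp add: sum_product)
  finally show "mult_transpose (m * n) (kron n A T) (kron n B U) i j = \<dots>" .
qed

lemma kron_skew_on:
  assumes "symmetric_on m M \<and> skew_on n N \<or> skew_on m M \<and> symmetric_on n N"
  shows "skew_on (m * n) (kron n M N)"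
proof -
  have index_bounds: "i div n < m \<and> i mod n < n" if "i < m * n" for i
  proof -
    have "0 < n" using that by (cases n) auto
    with that show ?thesis by (simp add: less_mult_imp_div_less mult.commute[of m])
  qed
  show ?thesis unfolding skew_on_def
  proof (intro allI impI)
    fix i j assume "i < m * n" "j < m * n"
    with index_bounds have "i div n < m" "i mod n < n" "j div n < m" "j mod n < n" by auto
    then have "M (j div n) (i div n) = M (i div n) (j div n) \<and> N (j mod n) (i mod n) = - N (i mod n) (j mod n)
      \<or> M (j div n) (i div n) = - M (i div n) (j div n) \<and> N (j mod n) (i mod n) = N (i mod n) (j mod n)"
      using assms unfolding skew_on_def symmetric_on_def by blast
    then show "kron n M N j i = - kron n M N i j" unfolding kron_def by auto
  qed
qed

lemma sum_sum_eq_diagonal_if_antisymmetric: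
  fixes F :: "nat \<Rightarrow> nat \<Rightarrow> int"
  assumes "finite S" and antisym: "\<And>p q. p \<in> S \<Longrightarrow> q \<in> S \<Longrightarrow> p \<noteq> q \<Longrightarrow> F q p = - F p q"
  shows "(\<Sum>p\<in>S. \<Sum>q\<in>S. F p q) = (\<Sum>p\<in>S. F p p)"
proof -
  have swap: "(\<Sum>p\<in>S. \<Sum>q\<in>S. F q p) = (\<Sum>p\<in>S. \<Sum>q\<in>S. F p q)" by (rule sum.swap)
  have "2 * (\<Sum>p\<in>S. \<Sum>q\<in>S. F p q) = (\<Sum>p\<in>S. \<Sum>q\<in>S. F p q + F q p)"
    by (simp only: sum.distrib swap mult_2)
  also have "\<dots> = (\<Sum>p\<in>S. \<Sum>q\<in>S. if q = p then 2 * F p p else 0)"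
  proof (intro sum.cong refl)
    fix p q assume "p \<in> S" "q \<in> S"
    then show "F p q + F q p = (if q = p then 2 * F p p else 0)"
      using antisym[of p q] by (cases "q = p") simp_all
  qed
  also have "\<dots> = 2 * (\<Sum>p\<in>S. F p p)"
    using \<open>finite S\<close> by (simp add: sum.delta' sum_distrib_left)
  finally show ?thesis by simp
qed

lemma mult_transpose_anticommuting_sum:
  fixes B :: "nat \<Rightarrow> nat \<Rightarrow> nat \<Rightarrow> int"
  assumes "finite S"
    and anticommute: "\<And>p q. p \<in> S \<Longrightarrow> q \<in> S \<Longrightarrow> p \<noteq> q \<Longrightarrow> skew_on n (mult_transpose n (B p) (B q))"
    and norm: "\<And>p. p \<in> S \<Longrightarrow> mult_transpose n (B p) (B p) i j = c p * of_bool (i = j)"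
    and "i < n" "j < n"
  shows "mult_transpose n (\<lambda>i j. \<Sum>p\<in>S. w p * B p i j) (\<lambda>i j. \<Sum>p\<in>S. w p * B p i j) i j
    = (\<Sum>p\<in>S. (w p)\<^sup>2 * c p) * of_bool (i = j)"
proof -
  let ?F = "\<lambda>p q. w p * w q * mult_transpose n (B p) (B q) i j"
  let ?G = "\<lambda>p q l. w p * w q * (B p i l * B q j l)"
  have "mult_transpose n (\<lambda>i j. \<Sum>p\<in>S. w p * B p i j) (\<lambda>i j. \<Sum>p\<in>S. w p * B p i j) i j
      = (\<Sum>l<n. \<Sum>p\<in>S. \<Sum>q\<in>S. ?G p q l)"
    unfolding mult_transpose_def sum_product by (simp add: mult_ac)
  also have "\<dots> = (\<Sum>p\<in>S. \<Sum>l<n. \<Sum>q\<in>S. ?G p q l)" by (rule sum.swap)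
  also have "\<dots> = (\<Sum>p\<in>S. \<Sum>q\<in>S. \<Sum>l<n. ?G p q l)" by (rule sum.cong[OF refl], rule sum.swap)
  also have "\<dots> = (\<Sum>p\<in>S. \<Sum>q\<in>S. ?F p q)" by (simp add: mult_transpose_def sum_distrib_left)
  also have "\<dots> = (\<Sum>p\<in>S. ?F p p)"
  proof (rule sum_sum_eq_diagonal_if_antisymmetric[OF \<open>finite S\<close>])
    fix p q assume "p \<in> S" "q \<in> S" "p \<noteq> q"
    then have "mult_transpose n (B p) (B q) j i = - mult_transpose n (B p) (B q) i j"
      using anticommute[of p q] \<open>i < n\<close> \<open>j < n\<close> unfolding skew_on_def by blast
    then show "?F q p = - ?F p q"
      using mult_transpose_swap[of n "B q" "B p" i j] by (simp add: mult.commute)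
  qed
  also have "\<dots> = (\<Sum>p\<in>S. (w p)\<^sup>2 * c p) * of_bool (i = j)"
    using norm by (simp add: sum_distrib_right power2_eq_square mult_ac)
  finally show ?thesis .
qed

section \<open>An orthogonal design around W\<close>

definition mat_of_rows :: "int list list \<Rightarrow> nat \<Rightarrow> nat \<Rightarrow> int" where
  "mat_of_rows rows i j = rows ! i ! j"

definition signed_perm :: "nat list \<Rightarrow> int list \<Rightarrow> nat \<Rightarrow> nat \<Rightarrow> int" where
  "signed_perm \<sigma> s i j = (if i = \<sigma> ! j then s ! j else 0)"

definition outer_block :: "nat \<Rightarrow> nat \<Rightarrow> nat \<Rightarrow> int" where
  "outer_block p = mat_of_rows
     (if p = 0 then [[1, 0], [0, 1]] else if p = 1 then [[0, 1], [-1, 0]]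
      else if p \<le> 4 then [[1, 0], [0, -1]] else [[0, 1], [1, 0]])"

definition inner_block :: "nat \<Rightarrow> nat \<Rightarrow> nat \<Rightarrow> int" where
  "inner_block p =
     (if p \<le> 1 then (\<lambda>i j. of_bool (i = j))
      else if p = 2 then signed_perm
        [1,0,15,8,21,16,13,11,3,20,23,7,19,6,18,2,5,22,14,12,9,4,17,10]
        [-1,1,1,1,1,1,-1,1,-1,1,1,-1,-1,1,1,-1,-1,1,-1,1,-1,-1,-1,-1]
      else if p = 3 then signed_perm
        [12,19,22,18,13,23,21,9,14,7,16,20,0,4,8,17,10,15,3,1,11,6,2,5]
        [-1,1,1,-1,-1,1,-1,1,-1,-1,-1,-1,1,1,1,1,1,-1,1,-1,1,1,-1,-1]
      else if p = 4 then signed_perm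
        [19,12,17,14,6,10,4,20,18,11,5,9,1,21,3,22,23,2,8,0,7,13,15,16]
        [1,1,-1,1,-1,-1,1,1,-1,-1,1,1,-1,1,-1,1,1,1,1,-1,-1,-1,-1,-1]
      else W24)"

definition design :: "nat \<Rightarrow> nat \<Rightarrow> nat \<Rightarrow> int" where
  "design p = kron 24 (outer_block p) (inner_block p)"

definition design_weight :: "nat \<Rightarrow> int" where
  "design_weight p = (if p = 5 then 23 else 1)"

lemma all_lessThan_eq_list_all: "(\<forall>i<n. P i) \<longleftrightarrow> list_all P [0..<n]"
  by (auto simp: list_all_iff)

lemma sum_lessThan_eq_sum_list: "(\<Sum>l<n. f l) = sum_list (map f [0..<n])"
  by (simp add: sum_list_distinct_conv_sum_set atLeast0LessThan)

lemmas evaluation_simps = all_lessThan_eq_list_all sum_lessThan_eq_sum_list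
  skew_on_def symmetric_on_def mult_transpose_def mat_of_rows_def signed_perm_def
  W24_def A23_def circulant_def A_row_def

lemma outer_block_gram: "\<forall>p<6. \<forall>i<2. \<forall>j<2. mult_transpose 2 (outer_block p) (outer_block p) i j = of_bool (i = j)"
  unfolding outer_block_def evaluation_simps by code_simp

text \<open>For p < q exactly one Kronecker factor of D_p D_q^T is skew and the other symmetric, so
  D_p D_q^T is skew.\<close>

lemma outer_block_products:
  "\<forall>p<6. \<forall>q<6. p < q \<longrightarrow>
     (if (p \<le> 1 \<and> q \<le> 1) \<or> (2 \<le> p \<and> q = 5)
      then skew_on 2 (mult_transpose 2 (outer_block p) (outer_block q))
      else symmetric_on 2 (mult_transpose 2 (outer_block p) (outer_block q)))"
  unfolding outer_block_def evaluation_simps by code_simp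

lemma inner_block_skew: "\<forall>q\<in>{2,3,4,5}. skew_on 24 (inner_block q)"
  unfolding inner_block_def evaluation_simps by code_simp

lemma signed_perm_gram: "\<forall>q\<in>{2,3,4}. \<forall>i<24. \<forall>j<24. mult_transpose 24 (inner_block q) (inner_block q) i j = of_bool (i = j)"
  unfolding inner_block_def evaluation_simps by code_simp

lemma W24_gram: "\<forall>i<24. \<forall>j<24. mult_transpose 24 W24 W24 i j = 23 * of_bool (i = j)"
  unfolding evaluation_simps by code_simp

lemma signed_perms_anticommute: "\<forall>p\<in>{2,3,4}. \<forall>q\<in>{2,3,4}. p < q \<longrightarrow> skew_on 24 (mult_transpose 24 (inner_block p) (inner_block q))"
  unfolding inner_block_def evaluation_simps by code_simp

lemma signed_perm_W24_symmetric: "\<forall>p\<in>{2,3,4}. symmetric_on 24 (mult_transpose 24 (inner_block p) W24)"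
  unfolding inner_block_def evaluation_simps by code_simp

lemma mult_transpose_identity_left:
  assumes "i < n"
  shows "mult_transpose n (\<lambda>a b. of_bool (a = b)) M i j = M j i"
proof -
  have "mult_transpose n (\<lambda>a b. of_bool (a = b)) M i j = (\<Sum>l<n. if l = i then M j l else 0)"
    unfolding mult_transpose_def by (intro sum.cong) auto
  also have "\<dots> = M j i" using assms by simp
  finally show ?thesis .
qed

lemma inner_block_gram:
  assumes "p < 6" "i < 24" "j < 24"
  shows "mult_transpose 24 (inner_block p) (inner_block p) i j = design_weight p * of_bool (i = j)"
proof -
  consider "p \<le> 1" | "p \<in> {2, 3, 4}" | "p = 5" using assms(1) by force
  then show ?thesis
  proof cases
    case 1
    then show ?thesis
      using mult_transpose_identity_left[OF \<open>i < 24\<close>] by (simp add: inner_block_def design_weight_def)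
  next
    case 2
    then show ?thesis using signed_perm_gram assms by (auto simp: design_weight_def)
  next
    case 3
    then show ?thesis using W24_gram assms by (simp add: inner_block_def design_weight_def)
  qed
qed

lemma inner_block_products:
  assumes "p < q" "q < 6"
  shows "if (p \<le> 1 \<and> q \<le> 1) \<or> (2 \<le> p \<and> q = 5)
    then symmetric_on 24 (mult_transpose 24 (inner_block p) (inner_block q))
    else skew_on 24 (mult_transpose 24 (inner_block p) (inner_block q))"
proof -
  consider "p \<le> 1" "q \<le> 1" | "p \<le> 1" "q \<in> {2, 3, 4, 5}" | "p \<in> {2, 3, 4}" "q \<in> {2, 3, 4}"
    | "p \<in> {2, 3, 4}" "q = 5"
    using assms by force
  then show ?thesis
  proof cases
    case 1
    then show ?thesis
      using mult_transpose_identity_left[of _ 24] by (simp add: inner_block_def symmetric_on_def)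
  next
    case 2
    then have identity: "inner_block p = (\<lambda>a b. of_bool (a = b))" by (simp add: inner_block_def)
    from 2 have "skew_on 24 (inner_block q)" using inner_block_skew by blast
    have "skew_on 24 (mult_transpose 24 (inner_block p) (inner_block q))"
    proof (unfold skew_on_def, intro allI impI)
      fix i j :: nat assume "i < 24" "j < 24"
      with \<open>skew_on 24 (inner_block q)\<close> have "inner_block q i j = - inner_block q j i"
        unfolding skew_on_def by blast
      with \<open>i < 24\<close> \<open>j < 24\<close> show "mult_transpose 24 (inner_block p) (inner_block q) j i
          = - mult_transpose 24 (inner_block p) (inner_block q) i j"
        by (simp add: identity mult_transpose_identity_left)
    qed
    with 2 show ?thesis by auto
  next
    case 3
    then show ?thesis using signed_perms_anticommute assms(1) by auto
  next
    case 4
    then show ?thesis using signed_perm_W24_symmetric by (auto simp: inner_block_def[of 5])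
  qed
qed

lemma design_anticommute:
  assumes "p < 6" "q < 6" "p \<noteq> q"
  shows "skew_on 48 (mult_transpose 48 (design p) (design q))"
proof -
  have ordered: "skew_on 48 (mult_transpose 48 (design p) (design q))" if "p < q" "q < 6" for p q
  proof -
    have "mult_transpose (2 * 24) (design p) (design q)
        = kron 24 (mult_transpose 2 (outer_block p) (outer_block q))
            (mult_transpose 24 (inner_block p) (inner_block q))"
      unfolding design_def by (rule mult_transpose_kron)
    moreover have "skew_on (2 * 24) \<dots>"
      using outer_block_products[rule_format, of p q] inner_block_products[OF that] that
      by (intro kron_skew_on) (simp split: if_splits)
    ultimately show ?thesis by simp
  qed
  show ?thesis
  proof (cases "p < q")
    case True
    with assms show ?thesis by (intro ordered)
  next
    case False
    with assms have "q < p" by simp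
    with ordered[of q p] assms show ?thesis by (simp add: skew_on_mult_transpose_swap)
  qed
qed

lemma design_gram:
  assumes "p < 6" "i < 48" "j < 48"
  shows "mult_transpose 48 (design p) (design p) i j = design_weight p * of_bool (i = j)"
proof -
  have "i div 24 < 2" "j div 24 < 2" using assms by simp_all
  then have "mult_transpose (2 * 24) (design p) (design p) i j
      = of_bool (i div 24 = j div 24) * (design_weight p * of_bool (i mod 24 = j mod 24))"
    unfolding design_def mult_transpose_kron kron_def
    using outer_block_gram inner_block_gram[OF \<open>p < 6\<close>] assms(1) by simp
  moreover have "(i div 24 = j div 24 \<and> i mod 24 = j mod 24) \<longleftrightarrow> i = j"
    by (metis div_mult_mod_eq)
  ultimately show ?thesis by auto
qed

lemma design_0_eq: "r < 48 \<Longrightarrow> j < 48 \<Longrightarrow> design 0 r j = of_bool (r = j)"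
proof -
  assume "r < 48" "j < 48"
  then have "r div 24 \<in> {0, 1}" "j div 24 \<in> {0, 1}" by auto
  moreover have "(r div 24 = j div 24 \<and> r mod 24 = j mod 24) \<longleftrightarrow> r = j"
    by (metis div_mult_mod_eq)
  ultimately show ?thesis
    by (auto simp: design_def kron_def outer_block_def inner_block_def mat_of_rows_def)
qed

lemma design_5_eq:
  "r < 48 \<Longrightarrow> j < 48 \<Longrightarrow> design 5 r j = of_bool (r div 24 \<noteq> j div 24) * W24 (r mod 24) (j mod 24)"
proof -
  assume "r < 48" "j < 48"
  then have "r div 24 \<in> {0, 1}" "j div 24 \<in> {0, 1}" by auto
  then show ?thesis
    by (auto simp: design_def kron_def outer_block_def inner_block_def mat_of_rows_def)
qed

lemma W24_square: "x < 24 \<Longrightarrow> z < 24 \<Longrightarrow> (\<Sum>i<24. W24 x i * W24 i z) = - 23 * of_bool (x = z)"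
proof -
  assume xz: "x < 24" "z < 24"
  have "skew_on 24 W24" using inner_block_skew by (simp add: inner_block_def)
  then have "W24 i z = - W24 z i" if "i < 24" for i
    using xz that unfolding skew_on_def by blast
  then have "(\<Sum>i<24. W24 x i * W24 i z) = - mult_transpose 24 W24 W24 x z"
    unfolding mult_transpose_def by (simp add: sum_negf[symmetric])
  then show ?thesis using W24_gram xz by simp
qed

text \<open>D_0 + D_5 = [[I, W], [W, I]]; its first 24 rows are those of (I W), and the last 24 are
  congruent to W (I W) = (W, W^2) since W^2 = -W W^T = -23 I \<equiv> I (mod 3).\<close>

definition code_row_coeff :: "nat \<Rightarrow> nat \<Rightarrow> int" where
  "code_row_coeff r i = (if r < 24 then of_bool (i = r) else W24 (r - 24) i)"

lemma design_rows_in_code: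
  assumes "r < 48" "j < 48"
  shows "3 dvd design 0 r j + design 5 r j - (\<Sum>i<24. code_row_coeff r i * genIW i j)"
proof (cases "r < 24")
  case True
  have "(\<Sum>i<24. code_row_coeff r i * genIW i j) = (\<Sum>i<24. if i = r then genIW r j else 0)"
    unfolding code_row_coeff_def using True by (intro sum.cong) auto
  also have "\<dots> = design 0 r j + design 5 r j"
    using True assms by (auto simp: design_0_eq design_5_eq genIW_def le_mod_geq)
  finally show ?thesis by simp
next
  case False
  define x where "x = r - 24"
  have x: "x < 24" "r div 24 = 1" "r mod 24 = x" using assms False unfolding x_def by (auto simp: le_mod_geq)
  have row: "(\<Sum>i<24. code_row_coeff r i * genIW i j) = (\<Sum>i<24. W24 x i * genIW i j)"
    unfolding code_row_coeff_def x_def using False by simp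
  show ?thesis
  proof (cases "j < 24")
    case True
    have "(\<Sum>i<24. W24 x i * genIW i j) = (\<Sum>i<24. if i = j then W24 x j else 0)"
      unfolding genIW_def using True by (intro sum.cong) auto
    then show ?thesis using True x assms row by (simp add: design_0_eq design_5_eq)
  next
    case False
    define z where "z = j - 24"
    have z: "z < 24" "j div 24 = 1" "j mod 24 = z" using assms False unfolding z_def by (auto simp: le_mod_geq)
    have "(\<Sum>i<24. W24 x i * genIW i j) = - 23 * of_bool (x = z)"
      unfolding genIW_def z_def[symmetric] using False W24_square[OF x(1) z(1)] by simp
    moreover have "design 0 r j = of_bool (x = z)"
      using assms x z by (simp add: design_0_eq x_def z_def) linarith
    ultimately show ?thesis using x z assms row by (simp add: design_5_eq)
  qed
qed

section \<open>Frames in A_3(C_3(W))\<close>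

lemma constrA_gen_code_memberI:
  fixes k :: int and u a :: "nat \<Rightarrow> int"
  assumes "\<And>j. j < N \<Longrightarrow> k dvd u j - (\<Sum>i<r. a i * G i j)"
  shows "(\<lambda>j. if j < N then of_int (u j) / sqrt (of_int k) else 0) \<in> constrA k N (gen_code k N r G)"
proof -
  define c where "c j = (if j < N then (\<Sum>i<r. a i * G i j) mod k else 0)" for j
  define z where "z j = (u j - c j) div k" for j
  have "c \<in> gen_code k N r G" unfolding gen_code_def c_def by auto
  moreover have "u j = c j + k * z j" if "j < N" for j
  proof -
    let ?s = "\<Sum>i<r. a i * G i j"
    have "c j = ?s - k * (?s div k)" using that by (simp add: c_def minus_mult_div_eq_mod)
    then have eq: "u j - c j = (u j - ?s) + k * (?s div k)" by simp
    have "k dvd (u j - ?s) + k * (?s div k)" using assms[OF that] by (intro dvd_add) simp_all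
    then have "k dvd u j - c j" by (simp only: eq)
    then show ?thesis unfolding z_def by simp
  qed
  ultimately show ?thesis
    unfolding constrA_def by (intro CollectI bexI[of _ c] exI[of _ z] allI) auto
qed

lemma sum_lessThan_6: "(\<Sum>p<(6::nat). f p) = f 0 + f 1 + f 2 + f 3 + f 4 + (f 5 :: int)"
  by (simp add: eval_nat_numeral)

lemma has_frame_of_representation:
  fixes k :: nat and w0 y c1 c2 c3 c4 :: int
  assumes rep: "3 * int k = w0\<^sup>2 + 9 * (c1\<^sup>2 + c2\<^sup>2 + c3\<^sup>2 + c4\<^sup>2) + 23 * y\<^sup>2"
    and cong: "[w0 = y] (mod 3)"
  shows "has_frame (constrA 3 48 (gen_code 3 48 24 genIW)) 48 (real k)"
proof -
  define w where "w p = [w0, 3 * c1, 3 * c2, 3 * c3, 3 * c4, y] ! p" for p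
  define N where "N i j = (\<Sum>p<6. w p * design p i j)" for i j
  define f where "f r j = (if j < 48 then of_int (N r j) / sqrt (of_int 3) else 0)" for r j
  have gram: "mult_transpose 48 N N r s = 3 * int k * of_bool (r = s)" if "r < 48" "s < 48" for r s
  proof -
    have "mult_transpose 48 N N r s = (\<Sum>p<6. (w p)\<^sup>2 * design_weight p) * of_bool (r = s)"
      unfolding N_def using design_anticommute design_gram that
      by (intro mult_transpose_anticommuting_sum) auto
    also have "(\<Sum>p<6. (w p)\<^sup>2 * design_weight p) = 3 * int k"
      unfolding rep sum_lessThan_6 by (simp add: w_def design_weight_def power_mult_distrib)
    finally show ?thesis .
  qed
  have "f r \<in> constrA 3 48 (gen_code 3 48 24 genIW)" if "r < 48" for r
    unfolding f_def
  proof (rule constrA_gen_code_memberI[where a = "\<lambda>i. y * code_row_coeff r i"])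
    fix j :: nat assume "j < 48"
    obtain e where e: "w0 = y + 3 * e" using cong by (metis cong_iff_lin cong_sym)
    have "N r j - (\<Sum>i<24. y * code_row_coeff r i * genIW i j)
      = y * (design 0 r j + design 5 r j - (\<Sum>i<24. code_row_coeff r i * genIW i j))
        + 3 * (e * design 0 r j + c1 * design 1 r j + c2 * design 2 r j + c3 * design 3 r j + c4 * design 4 r j)"
      unfolding N_def sum_lessThan_6 by (simp add: w_def e sum_distrib_left mult.assoc algebra_simps)
    moreover have "3 dvd design 0 r j + design 5 r j - (\<Sum>i<24. code_row_coeff r i * genIW i j)"
      using design_rows_in_code \<open>r < 48\<close> \<open>j < 48\<close> by (simp add: dvd_eq_mod_eq_0)
    ultimately show "3 dvd N r j - (\<Sum>i<24. y * code_row_coeff r i * genIW i j)" by simp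
  qed
  moreover have "inner_N 48 (f r) (f s) = (if r = s then real k else 0)" if "r < 48" "s < 48" for r s
  proof -
    have "inner_N 48 (f r) (f s) = of_int (mult_transpose 48 N N r s) / 3"
      unfolding inner_N_def f_def mult_transpose_def by (simp add: sum_divide_distrib)
    then show ?thesis using gram[OF that] by simp
  qed
  ultimately show ?thesis unfolding has_frame_def by blast
qed

lemma three_times_representation:
  fixes k :: nat
  assumes "3 \<le> k" "k \<notin> {4, 5, 7, 10}"
  obtains w0 y c1 c2 c3 c4 :: int
  where "3 * int k = w0\<^sup>2 + 9 * (c1\<^sup>2 + c2\<^sup>2 + c3\<^sup>2 + c4\<^sup>2) + 23 * y\<^sup>2" "[w0 = y] (mod 3)"
proof -
  from assms(2) have k_ne: "k \<noteq> 4" "k \<noteq> 5" "k \<noteq> 7" "k \<noteq> 10" by auto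
  have "\<exists>t. k = 3 * t \<or> k = 3 * t + 8 \<or> k = 3 * t + 13" using assms(1) k_ne by presburger
  then obtain t where "k = 3 * t \<or> k = 3 * t + 8 \<or> k = 3 * t + 13" by blast
  then have "\<exists>w0 y :: int. 3 * int k = 9 * int t + w0\<^sup>2 + 23 * y\<^sup>2 \<and> [w0 = y] (mod 3)"
  proof (elim disjE)
    assume "k = 3 * t"
    then show ?thesis by (intro exI[of _ 0]) simp
  next
    assume "k = 3 * t + 8"
    then show ?thesis by (intro exI[of _ 1]) simp
  next
    assume "k = 3 * t + 13"
    then show ?thesis by (intro exI[of _ 4] exI[of _ 1]) (simp add: cong_def)
  qed
  then obtain w0 y :: int where "3 * int k = 9 * int t + w0\<^sup>2 + 23 * y\<^sup>2" "[w0 = y] (mod 3)"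
    by blast
  moreover obtain c1 c2 c3 c4 where "int t = c1\<^sup>2 + c2\<^sup>2 + c3\<^sup>2 + c4\<^sup>2"
    using sum_four_squares_nat[of t] unfolding sum_four_squares_def by blast
  ultimately show ?thesis by (intro that[of w0 c1 c2 c3 c4 y]) auto
qed

theorem lemma5p1:
  fixes k :: nat
  assumes "k \<ge> 3"
    and "\<not> (\<exists>m1 m2 m3 m4 :: nat. k = 2 ^ m1 * 5 ^ m2 * 7 ^ m3 * 23 ^ m4)"
  shows "has_frame (constrA 3 48 (gen_code 3 48 24 genIW)) 48 (real k)"
proof -
  have "k \<notin> {4, 5, 7, 10}"
  proof
    assume "k \<in> {4, 5, 7, 10}"
    then have "k = 2 ^ 2 * 5 ^ 0 * 7 ^ 0 * 23 ^ 0 \<or> k = 2 ^ 0 * 5 ^ 1 * 7 ^ 0 * 23 ^ 0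
        \<or> k = 2 ^ 0 * 5 ^ 0 * 7 ^ 1 * 23 ^ 0 \<or> k = 2 ^ 1 * 5 ^ 1 * 7 ^ 0 * 23 ^ 0"
      by auto
    with assms(2) show False by blast
  qed
  with assms(1) obtain w0 y c1 c2 c3 c4 :: int
    where "3 * int k = w0\<^sup>2 + 9 * (c1\<^sup>2 + c2\<^sup>2 + c3\<^sup>2 + c4\<^sup>2) + 23 * y\<^sup>2" "[w0 = y] (mod 3)"
    by (rule three_times_representation)
  then show ?thesis by (rule has_frame_of_representation)
qed

end
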